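(* Let $P$ be a poset and $\mathcal{U}$ a join-specification for $P$. Then there is a largest join-specification $\mathcal{U}'\subseteq\mathcal{U}$ that is frame-generating.
   Context: A join-specification for $P$ is a set $\mathcal{U}\subseteq\wp(P)$ such that $\bigvee S$ exists in $P$ for every $S\in\mathcal{U}$ and $\{p\}\in\mathcal{U}$ for every $p\in P$. A $\mathcal{U}$-ideal is a down-closed $C\subseteq P$ with $\bigvee S\in C$ whenever $S\in\mathcal{U}$, $S\subseteq C$; $\mathcal{I}_{\mathcal{U}}$ is the complete lattice of $\mathcal{U}$-ideals ordered by inclusion; $\mathcal{U}$ is frame-generating if $\mathcal{I}_{\mathcal{U}}$ is a frame. *)

theory Defs
  imports Main
begin

text \<open>The poset P is the carrier of a type of class order (P = UNIV).\<close>

definition is_join :: "'a::order set \<Rightarrow> 'a \<Rightarrow> bool" where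
  "is_join S s \<longleftrightarrow> (\<forall>x\<in>S. x \<le> s) \<and> (\<forall>t. (\<forall>x\<in>S. x \<le> t) \<longrightarrow> s \<le> t)"

definition Join :: "'a::order set \<Rightarrow> 'a" where
  "Join S = (THE s. is_join S s)"

definition join_spec :: "'a::order set set \<Rightarrow> bool" where
  "join_spec U \<longleftrightarrow> (\<forall>S\<in>U. \<exists>s. is_join S s) \<and> (\<forall>p. {p} \<in> U)"

definition U_ideal :: "'a::order set set \<Rightarrow> 'a set \<Rightarrow> bool" where
  "U_ideal U C \<longleftrightarrow> (\<forall>x y. x \<in> C \<longrightarrow> y \<le> x \<longrightarrow> y \<in> C)
      \<and> (\<forall>S\<in>U. S \<subseteq> C \<longrightarrow> Join S \<in> C)"

definition U_ideals :: "'a::order set set \<Rightarrow> 'a set set" where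
  "U_ideals U = {C. U_ideal U C}"

definition is_lub_in :: "'b set set \<Rightarrow> 'b set set \<Rightarrow> 'b set \<Rightarrow> bool" where
  "is_lub_in L X s \<longleftrightarrow> s \<in> L \<and> (\<forall>x\<in>X. x \<subseteq> s) \<and> (\<forall>t\<in>L. (\<forall>x\<in>X. x \<subseteq> t) \<longrightarrow> s \<subseteq> t)"

definition is_glb_in :: "'b set set \<Rightarrow> 'b set set \<Rightarrow> 'b set \<Rightarrow> bool" where
  "is_glb_in L X s \<longleftrightarrow> s \<in> L \<and> (\<forall>x\<in>X. s \<subseteq> x) \<and> (\<forall>t\<in>L. (\<forall>x\<in>X. t \<subseteq> x) \<longrightarrow> t \<subseteq> s)"

definition sup_in :: "'b set set \<Rightarrow> 'b set set \<Rightarrow> 'b set" where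
  "sup_in L X = (THE s. is_lub_in L X s)"

definition inf_in :: "'b set set \<Rightarrow> 'b set set \<Rightarrow> 'b set" where
  "inf_in L X = (THE s. is_glb_in L X s)"

definition complete_lattice_in :: "'b set set \<Rightarrow> bool" where
  "complete_lattice_in L \<longleftrightarrow> (\<forall>X\<subseteq>L. (\<exists>s. is_lub_in L X s) \<and> (\<exists>s. is_glb_in L X s))"

definition frame_in :: "'b set set \<Rightarrow> bool" where
  "frame_in L \<longleftrightarrow> complete_lattice_in L \<and>
     (\<forall>a\<in>L. \<forall>X\<subseteq>L. inf_in L {a, sup_in L X} = sup_in L ((\<lambda>x. inf_in L {a, x}) ` X))"

definition frame_generating :: "'a::order set set \<Rightarrow> bool" where
  "frame_generating U \<longleftrightarrow> frame_in (U_ideals U)"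

end

theory Submission
  imports Defs "HOL.Hull"
begin

text \<open>
  A join-specification \<open>\<U>\<close> is frame-generating iff it is meet-distributive: for every
  \<open>S \<in> \<U>\<close> and \<open>x \<le> \<Or>S\<close>, the element \<open>x\<close> lies in the \<open>\<U>\<close>-ideal generated by \<open>\<down>x \<inter> \<down>S\<close>.
  This condition concerns one \<open>S\<close> at a time, and the \<open>\<U>\<close>-ideal generated by a fixed set
  only grows with \<open>\<U>\<close>, so the condition passes to unions. Hence the union of all
  frame-generating join-specifications contained in \<open>\<U>\<close> is again one, and it is the largest;
  the family is nonempty since the singletons form a frame-generating join-specification.
\<close>

lemma is_join_unique: "is_join S s \<Longrightarrow> is_join S t \<Longrightarrow> s = t"
  unfolding is_join_def by (meson order_antisym)

lemma Join_eq: "is_join S s \<Longrightarrow> Join S = s"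
  unfolding Join_def using is_join_unique by blast

lemma Join_singleton [simp]: "Join {p} = p"
  by (rule Join_eq) (simp add: is_join_def)

lemma join_spec_is_join_Join: "join_spec U \<Longrightarrow> S \<in> U \<Longrightarrow> is_join S (Join S)"
  unfolding join_spec_def using Join_eq by metis

lemma join_spec_singletons: "join_spec (range (\<lambda>p. {p}))"
  unfolding join_spec_def is_join_def by auto

lemma join_spec_Union:
  assumes "F \<noteq> {}" and "\<And>V. V \<in> F \<Longrightarrow> join_spec V"
  shows "join_spec (\<Union>F)"
  using assms unfolding join_spec_def by blast

lemma U_ideal_Inter: "(\<And>C. C \<in> F \<Longrightarrow> U_ideal U C) \<Longrightarrow> U_ideal U (\<Inter>F)"
  unfolding U_ideal_def by (simp add: subset_iff) blast

lemma U_ideal_Int: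
  assumes "U_ideal U A" and "U_ideal U B"
  shows "U_ideal U (A \<inter> B)"
proof -
  have "U_ideal U (\<Inter>{A, B})"
    by (rule U_ideal_Inter) (use assms in blast)
  then show ?thesis by simp
qed

lemma U_ideal_hull: "U_ideal U (U_ideal U hull A)"
  by (rule hull_in) (rule U_ideal_Inter, blast)

lemma U_ideal_antimono_spec: "V \<subseteq> U \<Longrightarrow> U_ideal U C \<Longrightarrow> U_ideal V C"
  unfolding U_ideal_def by blast

lemma U_ideal_hull_mono_spec: "V \<subseteq> U \<Longrightarrow> U_ideal V hull A \<subseteq> U_ideal U hull A"
  by (rule hull_antimono) (blast intro: U_ideal_antimono_spec)

lemma U_ideal_atMost:
  assumes "join_spec U"
  shows "U_ideal U {..x}"
  unfolding U_ideal_def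
proof (intro conjI allI impI ballI)
  fix y z :: 'a assume "z \<in> {..x}" "y \<le> z"
  then show "y \<in> {..x}" by simp
next
  fix S assume "S \<in> U" "S \<subseteq> {..x}"
  then show "Join S \<in> {..x}"
    using join_spec_is_join_Join[OF assms] unfolding is_join_def by blast
qed

lemma U_ideal_down_closed: "U_ideal U C \<Longrightarrow> x \<in> C \<Longrightarrow> y \<le> x \<Longrightarrow> y \<in> C"
  unfolding U_ideal_def by blast

lemma U_ideal_Join: "U_ideal U C \<Longrightarrow> S \<in> U \<Longrightarrow> S \<subseteq> C \<Longrightarrow> Join S \<in> C"
  unfolding U_ideal_def by blast

lemma is_lub_in_unique: "is_lub_in L X s \<Longrightarrow> is_lub_in L X t \<Longrightarrow> s = t"
  unfolding is_lub_in_def by (meson subset_antisym)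

lemma is_glb_in_unique: "is_glb_in L X s \<Longrightarrow> is_glb_in L X t \<Longrightarrow> s = t"
  unfolding is_glb_in_def by (meson subset_antisym)

lemma is_lub_in_U_ideals: "is_lub_in (U_ideals U) X (U_ideal U hull \<Union>X)"
  unfolding is_lub_in_def U_ideals_def
proof (intro conjI ballI impI)
  show "U_ideal U hull \<Union>X \<in> {C. U_ideal U C}"
    using U_ideal_hull by (rule CollectI)
  show "x \<subseteq> U_ideal U hull \<Union>X" if "x \<in> X" for x
    using that hull_subset[of "\<Union>X" "U_ideal U"] by (rule Union_upper[THEN order_trans])
  show "U_ideal U hull \<Union>X \<subseteq> t" if "t \<in> {C. U_ideal U C}" "\<forall>x\<in>X. x \<subseteq> t" for t
    using that by (intro hull_minimal Sup_least) auto
qed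

lemma is_glb_in_U_ideals: "X \<subseteq> U_ideals U \<Longrightarrow> is_glb_in (U_ideals U) X (\<Inter>X)"
  unfolding is_glb_in_def U_ideals_def
  using U_ideal_Inter[of X U] by (simp add: subset_iff Inter_lower Inter_greatest)

lemma sup_in_U_ideals: "sup_in (U_ideals U) X = U_ideal U hull \<Union>X"
  unfolding sup_in_def
  by (rule the_equality) (fact is_lub_in_U_ideals, rule is_lub_in_unique[OF _ is_lub_in_U_ideals])

lemma inf_in_U_ideals: "X \<subseteq> U_ideals U \<Longrightarrow> inf_in (U_ideals U) X = \<Inter>X"
  unfolding inf_in_def
  by (rule the_equality) (erule is_glb_in_U_ideals, erule is_glb_in_unique[OF _ is_glb_in_U_ideals])

lemma complete_lattice_in_U_ideals: "complete_lattice_in (U_ideals U)"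
  unfolding complete_lattice_in_def using is_lub_in_U_ideals is_glb_in_U_ideals by blast

lemma U_ideal_hull_in_U_ideals: "U_ideal U hull A \<in> U_ideals U"
  unfolding U_ideals_def using U_ideal_hull by (rule CollectI)

lemma frame_law_U_ideals:
  assumes a: "a \<in> U_ideals U" and X: "X \<subseteq> U_ideals U"
  shows "inf_in (U_ideals U) {a, sup_in (U_ideals U) X} = a \<inter> (U_ideal U hull \<Union>X)"
    and "sup_in (U_ideals U) ((\<lambda>x. inf_in (U_ideals U) {a, x}) ` X)
           = U_ideal U hull (a \<inter> \<Union>X)"
proof -
  have meet: "inf_in (U_ideals U) {a, x} = a \<inter> x" if "x \<in> U_ideals U" for x
    using inf_in_U_ideals[of "{a, x}" U] a that by simp
  show "inf_in (U_ideals U) {a, sup_in (U_ideals U) X} = a \<inter> (U_ideal U hull \<Union>X)"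
    unfolding sup_in_U_ideals using U_ideal_hull_in_U_ideals by (rule meet)
  have "(\<lambda>x. inf_in (U_ideals U) {a, x}) ` X = (\<inter>) a ` X"
    using X by (intro image_cong refl meet) blast
  then show "sup_in (U_ideals U) ((\<lambda>x. inf_in (U_ideals U) {a, x}) ` X)
               = U_ideal U hull (a \<inter> \<Union>X)"
    by (simp only: sup_in_U_ideals Int_Union)
qed

lemma frame_generating_iff:
  "frame_generating U \<longleftrightarrow>
     (\<forall>a\<in>U_ideals U. \<forall>X\<subseteq>U_ideals U.
        a \<inter> (U_ideal U hull \<Union>X) = U_ideal U hull (a \<inter> \<Union>X))"
  unfolding frame_generating_def frame_in_def
  by (simp add: complete_lattice_in_U_ideals frame_law_U_ideals)

definition meet_distributive :: "'a::order set set \<Rightarrow> bool" where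
  "meet_distributive U \<longleftrightarrow>
     (\<forall>S\<in>U. \<forall>x. x \<le> Join S \<longrightarrow> x \<in> U_ideal U hull ({..x} \<inter> (\<Union>s\<in>S. {..s})))"

lemma frame_generating_distrib:
  assumes "frame_generating U" and "U_ideal U a" and "\<And>x. x \<in> X \<Longrightarrow> U_ideal U x"
  shows "a \<inter> (U_ideal U hull \<Union>X) = U_ideal U hull (a \<inter> \<Union>X)"
proof -
  have "a \<in> U_ideals U" and "X \<subseteq> U_ideals U"
    using assms(2,3) unfolding U_ideals_def by blast+
  with assms(1) show ?thesis
    unfolding frame_generating_iff by blast
qed

lemma frame_generating_imp_meet_distributive:
  assumes js: "join_spec U" and fg: "frame_generating U"
  shows "meet_distributive U"
  unfolding meet_distributive_def
proof (intro ballI allI impI)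
  fix S x assume S: "S \<in> U" and x: "x \<le> Join S"
  \<comment> \<open>the frame law for \<open>\<down>x\<close> and the principal ideals \<open>\<down>s\<close>, \<open>s \<in> S\<close>\<close>
  let ?X = "(\<lambda>s. {..s}) ` S"
  have "S \<subseteq> \<Union>?X"
    by blast
  then have "S \<subseteq> U_ideal U hull \<Union>?X"
    using hull_subset by (rule order_trans)
  then have "Join S \<in> U_ideal U hull \<Union>?X"
    by (rule U_ideal_Join[OF U_ideal_hull S])
  then have "x \<in> {..x} \<inter> (U_ideal U hull \<Union>?X)"
    using U_ideal_down_closed[OF U_ideal_hull _ x] by blast
  also have "\<dots> = U_ideal U hull ({..x} \<inter> \<Union>?X)"
    using U_ideal_atMost[OF js] by (intro frame_generating_distrib[OF fg]) blast+
  finally show "x \<in> U_ideal U hull ({..x} \<inter> (\<Union>s\<in>S. {..s}))" .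
qed

text \<open>
  For the nontrivial inclusion \<open>a \<inter> (U_ideal U hull \<Union>X) \<subseteq> B\<close> one shows that the
  elements \<open>y\<close> with \<open>\<down>y \<inter> a \<subseteq> B\<close> form a \<open>\<U>\<close>-ideal containing \<open>\<Union>X\<close>; closure under
  the joins of \<open>\<U>\<close> is exactly where \<open>meet_distributive\<close> enters.
\<close>

lemma meet_distributive_imp_frame_generating:
  assumes md: "meet_distributive U"
  shows "frame_generating U"
  unfolding frame_generating_iff
proof (intro ballI allI impI)
  fix a X assume "a \<in> U_ideals U" "X \<subseteq> U_ideals U"
  then have a: "U_ideal U a" and X: "\<And>x. x \<in> X \<Longrightarrow> U_ideal U x"
    unfolding U_ideals_def by blast+
  define B where "B = U_ideal U hull (a \<inter> \<Union>X)"
  have B: "U_ideal U B"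
    unfolding B_def by (rule U_ideal_hull)
  have "B \<subseteq> a \<inter> (U_ideal U hull \<Union>X)"
    unfolding B_def
  proof (rule hull_minimal)
    show "a \<inter> \<Union>X \<subseteq> a \<inter> (U_ideal U hull \<Union>X)"
      using hull_subset[of "\<Union>X" "U_ideal U"] by (rule Int_mono[OF order_refl])
    show "U_ideal U (a \<inter> (U_ideal U hull \<Union>X))"
      using a U_ideal_hull by (rule U_ideal_Int)
  qed
  moreover have "{..y} \<inter> a \<subseteq> B" if "y \<in> U_ideal U hull \<Union>X" for y
    using that
  proof (rule hull_induct)
    show "{..y} \<inter> a \<subseteq> B" if "y \<in> \<Union>X" for y
    proof
      fix z assume z: "z \<in> {..y} \<inter> a"
      from \<open>y \<in> \<Union>X\<close> obtain x where "x \<in> X" "y \<in> x" by blast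
      with z have "z \<in> a \<inter> \<Union>X"
        using U_ideal_down_closed[OF X] by blast
      then show "z \<in> B"
        unfolding B_def by (rule hull_inc)
    qed
    show "U_ideal U {y. {..y} \<inter> a \<subseteq> B}"
      unfolding U_ideal_def
    proof (intro conjI allI impI ballI)
      fix x y :: 'a assume "x \<in> {y. {..y} \<inter> a \<subseteq> B}" "y \<le> x"
      then have "{..x} \<inter> a \<subseteq> B" and "{..y} \<subseteq> {..x}" by simp_all
      then show "y \<in> {y. {..y} \<inter> a \<subseteq> B}" by auto
    next
      fix S assume S: "S \<in> U" "S \<subseteq> {y. {..y} \<inter> a \<subseteq> B}"
      show "Join S \<in> {y. {..y} \<inter> a \<subseteq> B}"
      proof (intro CollectI subsetI)
        fix z assume z: "z \<in> {..Join S} \<inter> a"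
        have "{..z} \<inter> (\<Union>s\<in>S. {..s}) \<subseteq> B"
        proof
          fix w assume "w \<in> {..z} \<inter> (\<Union>s\<in>S. {..s})"
          then obtain s where "s \<in> S" "w \<le> s" "w \<le> z" by auto
          moreover have "w \<in> a"
            using U_ideal_down_closed[OF a] z \<open>w \<le> z\<close> by blast
          moreover have "{..s} \<inter> a \<subseteq> B"
            using S(2) \<open>s \<in> S\<close> by blast
          ultimately show "w \<in> B"
            by auto
        qed
        moreover have "z \<in> U_ideal U hull ({..z} \<inter> (\<Union>s\<in>S. {..s}))"
          using md S(1) z unfolding meet_distributive_def by simp
        ultimately show "z \<in> B"
          using hull_minimal[where S = "U_ideal U", OF _ B] by blast
      qed
    qed
  qed
  then have "a \<inter> (U_ideal U hull \<Union>X) \<subseteq> B"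
    by auto
  ultimately show "a \<inter> (U_ideal U hull \<Union>X) = B"
    by (rule subset_antisym[rotated])
qed

lemma frame_generating_iff_meet_distributive:
  "join_spec U \<Longrightarrow> frame_generating U \<longleftrightarrow> meet_distributive U"
  using frame_generating_imp_meet_distributive meet_distributive_imp_frame_generating by blast

lemma meet_distributive_Union:
  assumes "\<And>V. V \<in> F \<Longrightarrow> meet_distributive V"
  shows "meet_distributive (\<Union>F)"
  unfolding meet_distributive_def
proof (intro ballI allI impI)
  fix S x assume "S \<in> \<Union>F" "x \<le> Join S"
  then obtain V where "V \<in> F" "S \<in> V" by blast
  with assms \<open>x \<le> Join S\<close> have "x \<in> U_ideal V hull ({..x} \<inter> (\<Union>s\<in>S. {..s}))"
    unfolding meet_distributive_def by blast
  with \<open>V \<in> F\<close> show "x \<in> U_ideal (\<Union>F) hull ({..x} \<inter> (\<Union>s\<in>S. {..s}))"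
    using U_ideal_hull_mono_spec[of V "\<Union>F"] by blast
qed

lemma frame_generating_Union:
  assumes "F \<noteq> {}" and "\<And>V. V \<in> F \<Longrightarrow> join_spec V \<and> frame_generating V"
  shows "join_spec (\<Union>F) \<and> frame_generating (\<Union>F)"
proof
  show js: "join_spec (\<Union>F)"
    using assms by (blast intro: join_spec_Union)
  have "meet_distributive (\<Union>F)"
    using assms(2) frame_generating_imp_meet_distributive by (blast intro: meet_distributive_Union)
  with js show "frame_generating (\<Union>F)"
    by (simp add: frame_generating_iff_meet_distributive)
qed

lemma frame_generating_singletons: "frame_generating (range (\<lambda>p. {p}))"
proof (rule meet_distributive_imp_frame_generating)
  show "meet_distributive (range (\<lambda>p. {p}))"
    unfolding meet_distributive_def by (auto intro: hull_inc)
qed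

theorem proposition5p2:
  fixes U :: "'a::order set set"
  assumes "join_spec U"
  shows "\<exists>U'. U' \<subseteq> U \<and> join_spec U' \<and> frame_generating U' \<and>
           (\<forall>V. V \<subseteq> U \<and> join_spec V \<and> frame_generating V \<longrightarrow> V \<subseteq> U')"
proof -
  define F where "F = {V. V \<subseteq> U \<and> join_spec V \<and> frame_generating V}"
  have "range (\<lambda>p. {p}) \<subseteq> U"
    using assms unfolding join_spec_def by blast
  then have "F \<noteq> {}"
    using join_spec_singletons frame_generating_singletons unfolding F_def by blast
  then have "join_spec (\<Union>F) \<and> frame_generating (\<Union>F)"
    by (rule frame_generating_Union) (simp add: F_def)
  moreover have "\<Union>F \<subseteq> U" and "\<forall>V. V \<subseteq> U \<and> join_spec V \<and> frame_generating V \<longrightarrow> V \<subseteq> \<Union>F"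
    unfolding F_def by blast+
  ultimately show ?thesis by blast
qed

end
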